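(* Let $R$ be an integral domain and let $Q$ be a semi-latin quandle. If $Q$ is right orderable or left orderable, then the quandle ring $R[Q]$ has no zero-divisors.
   Context: A quandle is a non-empty set $Q$ with a binary operation $(x,y)\mapsto xy$ such that $xx=x$ for all $x$; for all $x,y$ there is a unique $z$ with $x=zy$; and $(xy)z=(xz)(yz)$ for all $x,y,z$. $Q$ is semi-latin if for each $x\in Q$ the map $y\mapsto xy$ is injective. $Q$ is right orderable if there is a linear order $<$ on $Q$ such that $x<y$ implies $xz<yz$ for all $x,y,z$; left orderable if there is a linear order $<$ such that $x<y$ implies $zx<zy$ for all $x,y,z$. The quandle ring $R[Q]$ is the free $R$-module with basis $Q$, with multiplication $\big(\sum_i\alpha_i x_i\big)\big(\sum_j\beta_j x_j\big)=\sum_{i,j}\alpha_i\beta_j (x_ix_j)$. A zero-divisor is a non-zero element $u$ for which there exists a non-zero $v$ with $uv=0$ or $vu=0$. *)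

theory Defs
  imports Main "HOL-Library.Poly_Mapping"
begin

definition quandle :: "('q \<Rightarrow> 'q \<Rightarrow> 'q) \<Rightarrow> bool" where
  "quandle op \<longleftrightarrow>
     (\<forall>x. op x x = x) \<and>
     (\<forall>x y. \<exists>!z. x = op z y) \<and>
     (\<forall>x y z. op (op x y) z = op (op x z) (op y z))"

definition semi_latin :: "('q \<Rightarrow> 'q \<Rightarrow> 'q) \<Rightarrow> bool" where
  "semi_latin op \<longleftrightarrow> (\<forall>x. inj (\<lambda>y. op x y))"

definition strict_linear_order :: "('q \<Rightarrow> 'q \<Rightarrow> bool) \<Rightarrow> bool" where
  "strict_linear_order lt \<longleftrightarrow>
     (\<forall>x. \<not> lt x x) \<and>
     (\<forall>x y z. lt x y \<longrightarrow> lt y z \<longrightarrow> lt x z) \<and>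
     (\<forall>x y. x \<noteq> y \<longrightarrow> lt x y \<or> lt y x)"

definition right_orderable :: "('q \<Rightarrow> 'q \<Rightarrow> 'q) \<Rightarrow> bool" where
  "right_orderable op \<longleftrightarrow> (\<exists>lt. strict_linear_order lt \<and>
     (\<forall>x y z. lt x y \<longrightarrow> lt (op x z) (op y z)))"

definition left_orderable :: "('q \<Rightarrow> 'q \<Rightarrow> 'q) \<Rightarrow> bool" where
  "left_orderable op \<longleftrightarrow> (\<exists>lt. strict_linear_order lt \<and>
     (\<forall>x y z. lt x y \<longrightarrow> lt (op z x) (op z y)))"

text \<open>Quandle ring R[Q]: elements are finitely supported functions Q =>0 R
  (the free R-module with basis Q); product extended bilinearly from op.\<close>
definition qring_mult :: "('q \<Rightarrow> 'q \<Rightarrow> 'q) \<Rightarrow> ('q \<Rightarrow>\<^sub>0 'r::comm_ring_1) \<Rightarrow> ('q \<Rightarrow>\<^sub>0 'r) \<Rightarrow> ('q \<Rightarrow>\<^sub>0 'r)" where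
  "qring_mult op u v =
     (\<Sum>x\<in>Poly_Mapping.keys u. \<Sum>y\<in>Poly_Mapping.keys v. Poly_Mapping.single (op x y) (Poly_Mapping.lookup u x * Poly_Mapping.lookup v y))"

definition qring_zero_divisor :: "('q \<Rightarrow> 'q \<Rightarrow> 'q) \<Rightarrow> ('q \<Rightarrow>\<^sub>0 'r::comm_ring_1) \<Rightarrow> bool" where
  "qring_zero_divisor op u \<longleftrightarrow> u \<noteq> 0 \<and>
     (\<exists>v. v \<noteq> 0 \<and> (qring_mult op u v = 0 \<or> qring_mult op v u = 0))"

end

theory Submission
  imports Defs
begin

text \<open>Either orderability hypothesis yields the unique product property: finite nonempty
  A, B contain a, b such that a b = x y with x in A, y in B forces x = a and y = b. For a right
  ordering take a maximal in A, then b with a b maximal in a B; left cancellation (semi-latin)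
  pins down y. A left ordering is a right ordering of the opposite operation, whose left
  cancellation is the right cancellation of the quandle. With A, B the supports of u, v, the
  coefficient of a b in u v is then the product of two nonzero coefficients.\<close>

definition unique_product :: "('q \<Rightarrow> 'q \<Rightarrow> 'q) \<Rightarrow> bool" where
  "unique_product op \<longleftrightarrow>
     (\<forall>A B. finite A \<longrightarrow> A \<noteq> {} \<longrightarrow> finite B \<longrightarrow> B \<noteq> {} \<longrightarrow>
       (\<exists>a\<in>A. \<exists>b\<in>B. \<forall>x\<in>A. \<forall>y\<in>B. op x y = op a b \<longrightarrow> x = a \<and> y = b))"

lemma strict_linear_orderD:
  assumes "strict_linear_order lt"
  shows strict_linear_order_irrefl: "\<not> lt x x"
    and strict_linear_order_trans: "lt x y \<Longrightarrow> lt y z \<Longrightarrow> lt x z"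
    and strict_linear_order_total: "x \<noteq> y \<Longrightarrow> lt x y \<or> lt y x"
  using assms unfolding strict_linear_order_def by blast+

lemma strict_linear_order_finite_greatest:
  assumes lt: "strict_linear_order lt" and "finite S" "S \<noteq> {}"
  shows "\<exists>m\<in>S. \<forall>s\<in>S. s \<noteq> m \<longrightarrow> lt s m"
  using assms(2,3)
proof (induction S rule: finite_ne_induct)
  case (singleton x)
  then show ?case by simp
next
  case (insert x F)
  then obtain m where m: "m \<in> F" "\<forall>s\<in>F. s \<noteq> m \<longrightarrow> lt s m" by blast
  show ?case
  proof (cases "lt m x")
    case True
    have "lt s x" if "s \<in> insert x F" "s \<noteq> x" for s
      using that m True strict_linear_order_trans[OF lt] by (cases "s = m") auto
    then show ?thesis by blast
  next
    case False
    with m insert.hyps have "lt x m"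
      using strict_linear_order_total[OF lt, of x m] by blast
    with m show ?thesis by blast
  qed
qed

lemma unique_product_if_right_monotone:
  assumes lt: "strict_linear_order lt"
    and mono: "\<And>x y z. lt x y \<Longrightarrow> lt (op x z) (op y z)"
    and inj: "\<And>z. inj (op z)"
  shows "unique_product op"
  unfolding unique_product_def
proof (intro allI impI)
  fix A B :: "'a set"
  assume "finite A" "A \<noteq> {}" "finite B" "B \<noteq> {}"
  obtain a where a: "a \<in> A" "\<forall>x\<in>A. x \<noteq> a \<longrightarrow> lt x a"
    using strict_linear_order_finite_greatest[OF lt \<open>finite A\<close> \<open>A \<noteq> {}\<close>] by blast
  obtain b where b: "b \<in> B" "\<forall>y\<in>B. op a y \<noteq> op a b \<longrightarrow> lt (op a y) (op a b)"
    using strict_linear_order_finite_greatest[OF lt, of "op a ` B"] \<open>finite B\<close> \<open>B \<noteq> {}\<close>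
    by auto
  have unique: "\<forall>x\<in>A. \<forall>y\<in>B. op x y = op a b \<longrightarrow> x = a \<and> y = b"
  proof (intro ballI impI)
    fix x y assume x: "x \<in> A" and y: "y \<in> B" and eq: "op x y = op a b"
    have "x = a"
    proof (rule ccontr)
      assume "x \<noteq> a"
      then have "lt (op x y) (op a y)" using a x mono by blast
      moreover have "op a y = op a b \<or> lt (op a y) (op a b)" using b y by blast
      ultimately have "lt (op a b) (op a b)"
        using eq strict_linear_order_trans[OF lt] by auto
      then show False by (simp add: strict_linear_order_irrefl[OF lt])
    qed
    with eq inj show "x = a \<and> y = b" by (simp add: inj_eq)
  qed
  show "\<exists>a\<in>A. \<exists>b\<in>B. \<forall>x\<in>A. \<forall>y\<in>B. op x y = op a b \<longrightarrow> x = a \<and> y = b"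
    using unique by (intro bexI[OF _ a(1)] bexI[OF _ b(1)])
qed

lemma unique_product_swap:
  assumes "unique_product (\<lambda>x y. op y x)"
  shows "unique_product op"
  unfolding unique_product_def
proof (intro allI impI)
  fix A B :: "'a set"
  assume "finite A" "A \<noteq> {}" "finite B" "B \<noteq> {}"
  then obtain b a where b: "b \<in> B" and a: "a \<in> A"
    and unique: "\<forall>y\<in>B. \<forall>x\<in>A. op x y = op a b \<longrightarrow> y = b \<and> x = a"
    using assms[unfolded unique_product_def, rule_format, of B A] by blast
  show "\<exists>a\<in>A. \<exists>b\<in>B. \<forall>x\<in>A. \<forall>y\<in>B. op x y = op a b \<longrightarrow> x = a \<and> y = b"
    using unique by (intro bexI[OF _ a] bexI[OF _ b]) simp
qed

lemma quandle_right_cancel: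
  assumes "quandle op"
  shows "inj (\<lambda>z. op z y)"
proof (rule injI)
  fix z z' assume eq: "op z y = op z' y"
  have "\<forall>x y. \<exists>!w. x = op w y" using assms unfolding quandle_def by (elim conjE)
  then have "\<exists>!w. op z y = op w y" by (elim allE)
  then show "z = z'" using eq by (elim ex1E) blast
qed

lemma quandle_unique_product:
  assumes "quandle op" and "semi_latin op"
    and "right_orderable op \<or> left_orderable op"
  shows "unique_product op"
  using assms(3)
proof
  assume "right_orderable op"
  then obtain lt where lt: "strict_linear_order lt"
    and mono: "\<forall>x y z. lt x y \<longrightarrow> lt (op x z) (op y z)"
    unfolding right_orderable_def by blast
  have "inj (op z)" for z
    using assms(2) unfolding semi_latin_def by (elim allE)
  with lt mono show ?thesis
    by (intro unique_product_if_right_monotone[of lt]) blast+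
next
  assume "left_orderable op"
  then obtain lt where lt: "strict_linear_order lt"
    and mono: "\<forall>x y z. lt x y \<longrightarrow> lt (op z x) (op z y)"
    unfolding left_orderable_def by blast
  have "unique_product (\<lambda>x y. op y x)"
    using lt mono quandle_right_cancel[OF assms(1)]
    by (intro unique_product_if_right_monotone[of lt]) blast+
  then show ?thesis by (rule unique_product_swap)
qed

lemma lookup_qring_mult:
  "Poly_Mapping.lookup (qring_mult op u v) w =
     (\<Sum>p\<in>{p \<in> Poly_Mapping.keys u \<times> Poly_Mapping.keys v. op (fst p) (snd p) = w}.
        Poly_Mapping.lookup u (fst p) * Poly_Mapping.lookup v (snd p))"
  (is "_ = ?rhs")
proof -
  have "Poly_Mapping.lookup (qring_mult op u v) w =
      (\<Sum>p\<in>Poly_Mapping.keys u \<times> Poly_Mapping.keys v.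
        if op (fst p) (snd p) = w
        then Poly_Mapping.lookup u (fst p) * Poly_Mapping.lookup v (snd p) else 0)"
    unfolding qring_mult_def
    by (simp add: lookup_sum lookup_single when_def sum.cartesian_product case_prod_unfold)
  also have "\<dots> = ?rhs"
    by (simp add: sum.inter_filter)
  finally show ?thesis .
qed

lemma qring_mult_nonzero:
  fixes u v :: "'q \<Rightarrow>\<^sub>0 'r::idom"
  assumes "unique_product op" and "u \<noteq> 0" and "v \<noteq> 0"
  shows "qring_mult op u v \<noteq> 0"
proof -
  have "\<exists>a\<in>Poly_Mapping.keys u. \<exists>b\<in>Poly_Mapping.keys v.
      \<forall>x\<in>Poly_Mapping.keys u. \<forall>y\<in>Poly_Mapping.keys v. op x y = op a b \<longrightarrow> x = a \<and> y = b"
    using assms(1)[unfolded unique_product_def, rule_format, of "Poly_Mapping.keys u"]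
      assms(2,3) by simp
  then obtain a b where a: "a \<in> Poly_Mapping.keys u" and b: "b \<in> Poly_Mapping.keys v"
    and unique: "\<forall>x\<in>Poly_Mapping.keys u. \<forall>y\<in>Poly_Mapping.keys v.
                   op x y = op a b \<longrightarrow> x = a \<and> y = b"
    by blast
  have "{p \<in> Poly_Mapping.keys u \<times> Poly_Mapping.keys v. op (fst p) (snd p) = op a b} = {(a, b)}"
    using a b unique by auto
  then have "Poly_Mapping.lookup (qring_mult op u v) (op a b) =
      Poly_Mapping.lookup u a * Poly_Mapping.lookup v b"
    unfolding lookup_qring_mult by simp
  also have "\<dots> \<noteq> 0" using a b by (simp add: in_keys_iff)
  finally show ?thesis by auto
qed

theorem theorem3p11:
  fixes op :: "'q \<Rightarrow> 'q \<Rightarrow> 'q"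
  assumes "quandle op"
    and "semi_latin op"
    and "right_orderable op \<or> left_orderable op"
  shows "\<not> (\<exists>u :: 'q \<Rightarrow>\<^sub>0 'r::idom. qring_zero_divisor op u)"
  using qring_mult_nonzero[OF quandle_unique_product[OF assms]]
  unfolding qring_zero_divisor_def by blast

end
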